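(* Let $X$ be an $n$-dimensional projective space over an arbitrary field and $K$ a $k$-dimensional subspace of $X$ with $-1\le k\le\frac{n-1}{2}$. Then for every point $P$ of $K$ there is a hyperplane $H_P$ of $X$ containing $P$ such that the set $\mathcal B_{X/P}$ of all lines of $X$ through $P$ contained in $H_P$ (which is a $(1,0)$-blocking set in $X/P$, i.e. every plane of $X$ through $P$ contains a line of $\mathcal B_{X/P}$) satisfies: (1) every line of $K$ through $P$ belongs to $\mathcal B_{X/P}$; and (2) for every line $L$ of $K$, the set $\mathcal B_L:=\bigcup_{P\in L}\bigl(\mathcal B_{X/P}\setminus\{\text{lines of }K\text{ through }P\}\bigr)$ blocks $\mathcal S_L:=\{S: S\text{ a plane of }X,\ K\cap S=L\}$, i.e. every $S\in\mathcal S_L$ contains some line of $\mathcal B_L$.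
   Context: Projective dimension is used. For a point $P$ of $X$, the quotient $X/P$ is the projective space whose $r$-dimensional subspaces are the $(r+1)$-dimensional subspaces of $X$ through $P$; thus its points are the lines of $X$ through $P$ and its hyperplanes are the hyperplanes of $X$ through $P$. A $(1,0)$-blocking set in a projective space is a set of points meeting every line. *)

theory Defs
  imports "HOL-Analysis.Analysis"
begin

text \<open>The projective space X = PG(n,F), n = CARD('m) - 1, over an arbitrary field F = 'a,
  is modelled by the lattice of linear subspaces of the vector space 'a^'m.
  A projective subspace of projective dimension d is a linear subspace of vector
  dimension d+1 (the empty projective subspace is the zero subspace, dimension -1).
  Incidence is inclusion.\<close>

definition proj_dim :: "('a::field ^ 'm) set \<Rightarrow> int" where
  "proj_dim U = int (vec.dim U) - 1"

definition proj_subspace :: "('a::field ^ 'm) set \<Rightarrow> int \<Rightarrow> bool" where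
  "proj_subspace U d \<longleftrightarrow> vec.subspace U \<and> proj_dim U = d"

abbreviation is_point :: "('a::field ^ 'm) set \<Rightarrow> bool" where
  "is_point U \<equiv> proj_subspace U 0"

abbreviation is_line :: "('a::field ^ 'm) set \<Rightarrow> bool" where
  "is_line U \<equiv> proj_subspace U 1"

abbreviation is_plane :: "('a::field ^ 'm) set \<Rightarrow> bool" where
  "is_plane U \<equiv> proj_subspace U 2"

definition is_hyperplane :: "('a::field ^ 'm) set \<Rightarrow> bool" where
  "is_hyperplane U \<longleftrightarrow> proj_subspace U (int CARD('m) - 2)"

end

theory Submission
  imports Defs
begin

text \<open>Extend a basis BK of K to a basis B of the whole space; as 2 dim K \<le> n + 1, there is an
  injection \<sigma> of BK into B - BK. With R the coordinates with respect to B, the bilinear form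
  F p x = \<Sum>b\<in>BK. R p b \<cdot> R x (\<sigma> b) vanishes whenever x \<in> K, while F p is a nonzero
  functional for every nonzero p \<in> K. Take H_P to be the polar {x. F p x = 0} of P = \<langle>p\<rangle>:
  it is a hyperplane containing K, which gives (1), and it meets every plane through P in a line
  through P. For (2), pick v in S but not in L; the functional q \<mapsto> F q v vanishes at some
  nonzero c of L, and \<langle>c, v\<rangle> is a line of S through \<langle>c\<rangle> lying in H_\<langle>c\<rangle> but not in K.\<close>

abbreviation linear_functional :: "('a::field ^ 'm \<Rightarrow> 'a) \<Rightarrow> bool" where
  "linear_functional g \<equiv> Vector_Spaces.linear (*s) (*) g"

lemma linear_functionalI:
  assumes "\<And>x y. g (x + y) = g x + g y" and "\<And>c x. g (c *s x) = c * g x"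
  shows "linear_functional g"
  by unfold_locales (simp_all add: assms algebra_simps)

lemma linear_functional_add: "linear_functional g \<Longrightarrow> g (x + y) = g x + g y"
  using module_hom.add linear_iff_module_hom by metis

lemma linear_functional_scale: "linear_functional g \<Longrightarrow> g (c *s x) = c * g x"
  using module_hom.scale linear_iff_module_hom by metis

lemma linear_functional_diff: "linear_functional g \<Longrightarrow> g (x - y) = g x - g y"
  using module_hom.diff linear_iff_module_hom by metis

lemma subspace_kernel_linear_functional: "linear_functional g \<Longrightarrow> vec.subspace {x. g x = 0}"
  using module_hom.subspace_kernel linear_iff_module_hom by metis

lemma proj_subspace_iff_dim: "proj_subspace U d \<longleftrightarrow> vec.subspace U \<and> int (vec.dim U) = d + 1"
  by (auto simp: proj_subspace_def proj_dim_def)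

lemma is_point_span_singleton:
  fixes p :: "'a::field ^ 'm"
  assumes "p \<noteq> 0"
  shows "is_point (vec.span {p})"
proof -
  have "vec.independent {p}" using assms by (simp add: vec.independent_insert)
  then show ?thesis
    by (simp add: proj_subspace_iff_dim vec.dim_span_eq_card_independent)
qed

lemma is_line_span_pair:
  fixes p :: "'a::field ^ 'm"
  assumes "p \<noteq> 0" and "c \<notin> vec.span {p}"
  shows "is_line (vec.span {p, c})"
proof -
  have "vec.independent {p, c}" using assms by (simp add: vec.independent_insert insert_commute)
  moreover have "c \<noteq> p" using assms(2) vec.span_base by blast
  ultimately show ?thesis
    by (simp add: proj_subspace_iff_dim vec.dim_eq_card_independent)
qed

lemma is_pointE:
  fixes P :: "('a::field ^ 'm) set"
  assumes "is_point P"
  obtains p where "p \<noteq> 0" and "P = vec.span {p}"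
proof -
  have P: "vec.subspace P" "vec.dim P = 1" using assms by (auto simp: proj_subspace_iff_dim)
  obtain B where B: "B \<subseteq> P" "vec.independent B" "P \<subseteq> vec.span B" "card B = vec.dim P"
    by (rule vec.basis_exists)
  obtain p where p: "B = {p}" using B(4) P(2) by (metis card_1_singletonE)
  show thesis
  proof
    show "p \<noteq> 0" using B(2) p vec.dependent_zero by blast
    show "P = vec.span {p}" using vec.span_subspace[OF B(1,3) P(1)] p by simp
  qed
qed

lemma is_lineE:
  fixes L :: "('a::field ^ 'm) set"
  assumes "is_line L"
  obtains a b where "a \<noteq> 0" and "b \<notin> vec.span {a}" and "L = vec.span {a, b}"
proof -
  have L: "vec.subspace L" "vec.dim L = 2" using assms by (auto simp: proj_subspace_iff_dim)
  obtain B where B: "B \<subseteq> L" "vec.independent B" "L \<subseteq> vec.span B" "card B = vec.dim L"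
    by (rule vec.basis_exists)
  obtain a b where ab: "B = {b, a}" "a \<noteq> b" using B(4) L(2) by (metis card_2_iff)
  show thesis
  proof
    show "a \<noteq> 0" using B(2) ab(1) vec.dependent_zero by blast
    show "b \<notin> vec.span {a}" using B(2) ab by (simp add: vec.independent_insert)
    show "L = vec.span {a, b}"
      using vec.span_subspace[OF B(1,3) L(1)] ab(1) by (simp add: insert_commute)
  qed
qed

lemma is_plane_not_subset_span_pair:
  fixes S :: "('a::field ^ 'm) set"
  assumes "is_plane S"
  shows "\<not> S \<subseteq> vec.span {p, q}"
proof
  assume "S \<subseteq> vec.span {p, q}"
  then have "vec.dim S \<le> card {p, q}" by (rule vec.dim_le_card) simp
  also have "\<dots> \<le> 2" by (simp add: card_insert_le_m1)
  finally show False using assms by (simp add: proj_subspace_iff_dim)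
qed

lemma is_hyperplane_kernel:
  fixes g :: "'a::field ^ 'm \<Rightarrow> 'a"
  assumes g: "linear_functional g" and w: "g w \<noteq> 0"
  shows "is_hyperplane {x. g x = 0}"
proof -
  let ?Z = "{x. g x = 0}"
  have Z: "vec.subspace ?Z" using g by (rule subspace_kernel_linear_functional)
  obtain B where B: "B \<subseteq> ?Z" "vec.independent B" "?Z \<subseteq> vec.span B" "card B = vec.dim ?Z"
    by (rule vec.basis_exists)
  have span_B: "vec.span B = ?Z" using vec.span_subspace[OF B(1,3) Z] .
  then have w_B: "w \<notin> vec.span B" using w by auto
  have "x \<in> vec.span (insert w B)" for x
  proof -
    have "g (x - (g x / g w) *s w) = 0"
      using w by (simp add: linear_functional_diff[OF g] linear_functional_scale[OF g])
    then show ?thesis unfolding vec.span_breakdown_eq span_B by blast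
  qed
  then have "vec.span (insert w B) = vec.span UNIV" by auto
  then have "vec.dim (UNIV :: ('a ^ 'm) set) = card (insert w B)"
    using vec.dim_eq_card vec.independent_insertI[OF w_B B(2)] by blast
  moreover have "finite B" using B(2) vec.finiteI_independent by blast
  moreover have "w \<notin> B" using w_B vec.span_base by blast
  ultimately have "CARD('m) = vec.dim ?Z + 1" using B(4) by (simp add: card_cart_basis)
  then show ?thesis using Z by (simp add: is_hyperplane_def proj_subspace_iff_dim)
qed

lemma linear_functional_zero_in_span_pair:
  fixes g :: "'a::field ^ 'm \<Rightarrow> 'a"
  assumes g: "linear_functional g"
    and x: "x \<notin> vec.span A" and y: "y \<notin> vec.span (insert x A)"
  obtains c where "c \<in> vec.span {x, y}" and "c \<notin> vec.span A" and "g c = 0"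
proof (cases "g y = 0")
  case True
  have "y \<notin> vec.span A" using y vec.span_mono[of A "insert x A"] by blast
  with True show thesis by (intro that[of y]) (simp_all add: vec.span_base)
next
  case False
  define c where "c = x - (g x / g y) *s y"
  have "g c = 0"
    using False by (simp add: c_def linear_functional_diff[OF g] linear_functional_scale[OF g])
  moreover have "c \<in> vec.span {x, y}"
    unfolding c_def by (intro vec.span_diff vec.span_scale) (auto intro: vec.span_base)
  moreover have "c \<notin> vec.span A"
  proof
    assume c_A: "c \<in> vec.span A"
    show False
    proof (cases "g x = 0")
      case True
      then show False using c_A x by (simp add: c_def)
    next
      case g_x: False
      have "x - c \<in> vec.span (insert x A)"
        using c_A vec.span_mono[of A "insert x A"] by (intro vec.span_diff) (auto intro: vec.span_base)
      moreover have "y = (g y / g x) *s (x - c)" using g_x False by (simp add: c_def)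
      ultimately have "y \<in> vec.span (insert x A)" by (metis vec.span_scale)
      then show False using y by contradiction
    qed
  qed
  ultimately show thesis using that by blast
qed

lemma plane_meets_kernel_in_line:
  fixes g :: "'a::field ^ 'm \<Rightarrow> 'a"
  assumes g: "linear_functional g"
    and P: "is_point P" "P \<subseteq> {x. g x = 0}" and S: "is_plane S" "P \<subseteq> S"
  shows "\<exists>l. is_line l \<and> P \<subseteq> l \<and> l \<subseteq> {x. g x = 0} \<and> l \<subseteq> S"
proof -
  obtain p where p: "p \<noteq> 0" "P = vec.span {p}" using P(1) by (rule is_pointE)
  have "p \<in> P" unfolding p(2) by (simp add: vec.span_base)
  then have p_S: "p \<in> S" and p_g: "g p = 0" using P(2) S(2) by auto
  have S_sub: "vec.subspace S" using S(1) by (simp add: proj_subspace_iff_dim)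
  obtain u1 where u1: "u1 \<in> S" "u1 \<notin> vec.span {p}"
    using is_plane_not_subset_span_pair[OF S(1), of p p] by auto
  obtain u2 where u2: "u2 \<in> S" "u2 \<notin> vec.span (insert u1 {p})"
    using is_plane_not_subset_span_pair[OF S(1), of u1 p] by auto
  obtain c where c: "c \<in> vec.span {u1, u2}" "c \<notin> vec.span {p}" "g c = 0"
    using linear_functional_zero_in_span_pair[OF g u1(2) u2(2)] .
  have "c \<in> S" using c(1) vec.span_minimal[of "{u1, u2}" S] S_sub u1(1) u2(1) by auto
  show ?thesis
  proof (intro exI conjI)
    show "is_line (vec.span {p, c})" using p(1) c(2) by (rule is_line_span_pair)
    show "P \<subseteq> vec.span {p, c}" unfolding p(2) by (rule vec.span_mono) auto
    show "vec.span {p, c} \<subseteq> {x. g x = 0}"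
      using p_g c(3) by (intro vec.span_minimal subspace_kernel_linear_functional[OF g]) auto
    show "vec.span {p, c} \<subseteq> S"
      using p_S \<open>c \<in> S\<close> by (intro vec.span_minimal S_sub) auto
  qed
qed

locale subspace_pairing =
  fixes F :: "'a::field ^ 'm \<Rightarrow> 'a ^ 'm \<Rightarrow> 'a" and K :: "('a ^ 'm) set"
  assumes linear_left: "linear_functional (\<lambda>p. F p x)"
    and linear_right: "linear_functional (F p)"
    and vanishes_right: "x \<in> K \<Longrightarrow> F p x = 0"
    and nondegenerate_left: "p \<in> K \<Longrightarrow> p \<noteq> 0 \<Longrightarrow> \<exists>w. F p w \<noteq> 0"
begin

definition polar :: "('a ^ 'm) set \<Rightarrow> ('a ^ 'm) set" where
  "polar P = {x. \<forall>q\<in>P. F q x = 0}"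

lemma polar_span_singleton: "polar (vec.span {p}) = {x. F p x = 0}"
  by (auto simp: polar_def vec.span_singleton linear_functional_scale[OF linear_left]
      intro: vec.span_base)

lemma subset_polar: "K \<subseteq> polar P"
  by (auto simp: polar_def vanishes_right)

lemma is_hyperplane_polar:
  assumes "is_point P" and "P \<subseteq> K"
  shows "is_hyperplane (polar P)"
proof -
  obtain p where p: "p \<noteq> 0" "P = vec.span {p}" using assms(1) by (rule is_pointE)
  then have "p \<in> K" using assms(2) vec.span_base by blast
  then obtain w where "F p w \<noteq> 0" using nondegenerate_left p(1) by blast
  then show ?thesis
    unfolding p(2) polar_span_singleton using linear_right by (rule is_hyperplane_kernel[rotated])
qed

lemma plane_meets_polar_in_line:
  assumes "is_point P" "P \<subseteq> K" "is_plane S" "P \<subseteq> S"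
  shows "\<exists>l. is_line l \<and> P \<subseteq> l \<and> l \<subseteq> polar P \<and> l \<subseteq> S"
proof -
  obtain p where p: "p \<noteq> 0" "P = vec.span {p}" using assms(1) by (rule is_pointE)
  have "P \<subseteq> {x. F p x = 0}"
    using assms(2) subset_polar[of P] by (simp add: p(2) polar_span_singleton)
  from plane_meets_kernel_in_line[OF linear_right assms(1) this assms(3,4)]
  show ?thesis by (simp add: p(2) polar_span_singleton)
qed

lemma plane_meets_polar_in_line_off_subspace:
  assumes L: "is_line L" "L \<subseteq> K" and S: "is_plane S" "K \<inter> S = L"
  shows "\<exists>P l. is_point P \<and> P \<subseteq> L \<and> is_line l \<and> P \<subseteq> l \<and> l \<subseteq> polar P \<and> \<not> l \<subseteq> K \<and> l \<subseteq> S"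
proof -
  have S_sub: "vec.subspace S" and L_sub: "vec.subspace L"
    using S(1) L(1) by (simp_all add: proj_subspace_iff_dim)
  have "\<not> S \<subseteq> L" using vec.dim_subset[of S L] L(1) S(1) by (auto simp: proj_subspace_iff_dim)
  then obtain v where v: "v \<in> S" "v \<notin> L" by auto
  with S(2) have "v \<notin> K" by auto
  obtain a b where ab: "a \<noteq> 0" "b \<notin> vec.span {a}" "L = vec.span {a, b}"
    using L(1) by (rule is_lineE)
  have "a \<notin> vec.span {}" and "b \<notin> vec.span (insert a {})" using ab(1,2) by simp_all
  then obtain c where c: "c \<in> vec.span {a, b}" "c \<notin> vec.span {}" "F c v = 0"
    by (rule linear_functional_zero_in_span_pair[OF linear_left])
  with ab(3) have c_L: "c \<in> L" by simp
  have "vec.span {c} \<subseteq> L" using c_L L_sub by (simp add: vec.span_minimal)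
  show ?thesis
  proof (intro exI conjI)
    show "is_point (vec.span {c})" using c(2) by (simp add: is_point_span_singleton)
    show "vec.span {c} \<subseteq> L" by fact
    show "is_line (vec.span {c, v})"
      using c(2) v(2) \<open>vec.span {c} \<subseteq> L\<close> by (intro is_line_span_pair) auto
    show "vec.span {c} \<subseteq> vec.span {c, v}" by (rule vec.span_mono) auto
    show "vec.span {c, v} \<subseteq> polar (vec.span {c})"
      unfolding polar_span_singleton using c_L c(3) L(2)
      by (intro vec.span_minimal subspace_kernel_linear_functional[OF linear_right])
        (auto intro: vanishes_right)
    show "\<not> vec.span {c, v} \<subseteq> K" using \<open>v \<notin> K\<close> vec.span_base[of v "{c, v}"] by auto
    show "vec.span {c, v} \<subseteq> S"
      using c_L v(1) S(2) by (intro vec.span_minimal S_sub) auto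
  qed
qed

end

lemma extend_basis_with_injection:
  fixes K :: "('a::field ^ 'm) set"
  assumes K: "vec.subspace K" and dim_K: "2 * vec.dim K \<le> CARD('m)"
  obtains B BK \<sigma> where "vec.independent B" and "vec.span B = UNIV"
    and "BK \<subseteq> B" and "vec.span BK = K" and "\<sigma> ` BK \<subseteq> B - BK" and "inj_on \<sigma> BK"
proof -
  obtain BK where BK: "BK \<subseteq> K" "vec.independent BK" "K \<subseteq> vec.span BK" "card BK = vec.dim K"
    by (rule vec.basis_exists)
  obtain B where B: "BK \<subseteq> B" "vec.independent B" "UNIV \<subseteq> vec.span B"
    using vec.maximal_independent_subset_extend[of BK UNIV] BK(2) by auto
  have "finite B" using B(2) vec.finiteI_independent by blast
  have span_B: "vec.span B = UNIV" using B(3) by auto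
  then have "card B = CARD('m)"
    using vec.dim_eq_card[OF _ B(2), of UNIV] by (simp add: card_cart_basis)
  then have "card BK \<le> card (B - BK)"
    using dim_K BK(4) B(1) \<open>finite B\<close> by (simp add: card_Diff_subset finite_subset)
  then obtain \<sigma> where "\<sigma> ` BK \<subseteq> B - BK" "inj_on \<sigma> BK"
    using card_le_inj \<open>finite B\<close> B(1) by (meson finite_Diff finite_subset)
  moreover have "vec.span BK = K" using vec.span_subspace[OF BK(1,3) K] .
  ultimately show thesis using that B(1,2) span_B by blast
qed

definition coordinate_pairing ::
    "('a::field ^ 'm) set \<Rightarrow> ('a ^ 'm) set \<Rightarrow> ('a ^ 'm \<Rightarrow> 'a ^ 'm) \<Rightarrow> 'a ^ 'm \<Rightarrow> 'a ^ 'm \<Rightarrow> 'a"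
  where "coordinate_pairing B BK \<sigma> p x =
    (\<Sum>b\<in>BK. vec.representation B p b * vec.representation B x (\<sigma> b))"

lemma subspace_pairing_coordinate_pairing:
  assumes B: "vec.independent B" "vec.span B = UNIV" and BK: "BK \<subseteq> B"
    and \<sigma>: "\<sigma> ` BK \<subseteq> B - BK" "inj_on \<sigma> BK"
  shows "subspace_pairing (coordinate_pairing B BK \<sigma>) (vec.span BK)"
proof (rule subspace_pairing.intro)
  let ?R = "vec.representation B"
  note R_linear = vec.linear_representation[OF B]
  note R_simps = linear_functional_add[OF R_linear] linear_functional_scale[OF R_linear]
  have "finite BK" using BK B(1) vec.finiteI_independent finite_subset by blast
  have R_BK: "?R x = vec.representation BK x" if "x \<in> vec.span BK" for x
    using vec.representation_extend[OF B(1) that BK] .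
  show "linear_functional (\<lambda>p. coordinate_pairing B BK \<sigma> p x)" for x
    by (rule linear_functionalI)
      (simp_all add: coordinate_pairing_def R_simps sum.distrib sum_distrib_left algebra_simps)
  show "linear_functional (coordinate_pairing B BK \<sigma> p)" for p
    by (rule linear_functionalI)
      (simp_all add: coordinate_pairing_def R_simps sum.distrib sum_distrib_left algebra_simps)
  show "coordinate_pairing B BK \<sigma> p x = 0" if "x \<in> vec.span BK" for p x
  proof -
    have "?R x (\<sigma> b) = 0" if "b \<in> BK" for b
      using R_BK[OF \<open>x \<in> vec.span BK\<close>] vec.representation_ne_zero \<sigma>(1) that by fastforce
    then show ?thesis by (simp add: coordinate_pairing_def)
  qed
  show "\<exists>w. coordinate_pairing B BK \<sigma> p w \<noteq> 0" if p: "p \<in> vec.span BK" "p \<noteq> 0" for p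
  proof -
    have "(\<Sum>b\<in>BK. ?R p b *s b) = p"
      using vec.sum_representation_eq[OF _ p(1) \<open>finite BK\<close>] R_BK[OF p(1)] B(1) BK
      by (simp add: vec.independent_mono)
    then obtain b0 where b0: "b0 \<in> BK" "?R p b0 \<noteq> 0"
      using p(2) by (metis (no_types, lifting) sum.neutral vec.scale_zero_left)
    have "\<sigma> b0 \<in> B" using \<sigma>(1) b0(1) by auto
    have R_\<sigma>: "?R p b * ?R (\<sigma> b0) (\<sigma> b) = (if b = b0 then ?R p b0 else 0)" if "b \<in> BK" for b
      unfolding vec.representation_basis[OF B(1) \<open>\<sigma> b0 \<in> B\<close>]
      using inj_onD[OF \<sigma>(2) _ that b0(1)] by auto
    have "coordinate_pairing B BK \<sigma> p (\<sigma> b0) = ?R p b0"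
      using b0(1) \<open>finite BK\<close> by (simp add: coordinate_pairing_def R_\<sigma> cong: sum.cong)
    then show ?thesis using b0(2) by metis
  qed
qed

theorem corollary3p28:
  fixes K :: "('a::field ^ 'm) set" and k n :: int
  assumes "n = int CARD('m) - 1"
    and "proj_subspace K k"
    and "-1 \<le> k" and "2 * k \<le> n - 1"
  shows "\<exists>H :: ('a ^ 'm) set \<Rightarrow> ('a ^ 'm) set.
    (\<forall>P. is_point P \<and> P \<subseteq> K \<longrightarrow>
        is_hyperplane (H P) \<and> P \<subseteq> H P
      \<comment> \<open>B_{X/P} = lines through P in H P is a (1,0)-blocking set of X/P\<close>
      \<and> (\<forall>S. is_plane S \<and> P \<subseteq> S \<longrightarrow>
             (\<exists>l. is_line l \<and> P \<subseteq> l \<and> l \<subseteq> H P \<and> l \<subseteq> S))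
      \<comment> \<open>(1)\<close>
      \<and> (\<forall>l. is_line l \<and> P \<subseteq> l \<and> l \<subseteq> K \<longrightarrow> l \<subseteq> H P))
    \<comment> \<open>(2)\<close>
    \<and> (\<forall>L. is_line L \<and> L \<subseteq> K \<longrightarrow>
         (\<forall>S. is_plane S \<and> K \<inter> S = L \<longrightarrow>
            (\<exists>P l. is_point P \<and> P \<subseteq> L \<and> is_line l \<and> P \<subseteq> l \<and> l \<subseteq> H P
                   \<and> \<not> l \<subseteq> K \<and> l \<subseteq> S)))"
proof -
  \<comment> \<open>the hypothesis -1 \<le> k is automatic, as proj_dim K = vec.dim K - 1\<close>
  have "vec.subspace K" and "2 * vec.dim K \<le> CARD('m)"
    using assms(1,2,4) by (auto simp: proj_subspace_iff_dim)
  then obtain B BK \<sigma> where "vec.independent B" "vec.span B = UNIV" "BK \<subseteq> B"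
      "vec.span BK = K" "\<sigma> ` BK \<subseteq> B - BK" "inj_on \<sigma> BK"
    by (rule extend_basis_with_injection)
  then interpret subspace_pairing "coordinate_pairing B BK \<sigma>" K
    using subspace_pairing_coordinate_pairing by metis
  show ?thesis
  proof (intro exI[of _ polar] conjI allI impI)
    show "is_hyperplane (polar P)" "P \<subseteq> polar P" if "is_point P \<and> P \<subseteq> K" for P
      using that is_hyperplane_polar subset_polar by blast+
    show "\<exists>l. is_line l \<and> P \<subseteq> l \<and> l \<subseteq> polar P \<and> l \<subseteq> S"
      if "is_point P \<and> P \<subseteq> K" "is_plane S \<and> P \<subseteq> S" for P S
      using that plane_meets_polar_in_line by blast
    show "l \<subseteq> polar P" if "is_line l \<and> P \<subseteq> l \<and> l \<subseteq> K" for P l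
      using that subset_polar by blast
    show "\<exists>P l. is_point P \<and> P \<subseteq> L \<and> is_line l \<and> P \<subseteq> l \<and> l \<subseteq> polar P \<and> \<not> l \<subseteq> K \<and> l \<subseteq> S"
      if "is_line L \<and> L \<subseteq> K" "is_plane S \<and> K \<inter> S = L" for L S
      using that plane_meets_polar_in_line_off_subspace by blast
  qed
qed

end
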